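(* Let $\lambda\neq 0,1$ be real, let $I\subset\mathbb{R}$ be an open interval, and let $x+iy:I\to\mathbb{C}$ be a smooth immersion. Consider the Levi-flat hypersurface $$\Sigma=\{[1,\ e^{w+x(r)+iy(r)},\ e^{\lambda w}]: w\in\mathbb{C},\ r\in I\}\subset\mathbb{CP}^2,$$ with $\mathbb{CP}^2$ given the Fubini–Study metric. Then $\Sigma$ is minimal if and only if $y$ is constant on $I$.
   Context: A real hypersurface is minimal if its mean curvature vanishes. The Fubini–Study metric is taken in unitary homogeneous coordinates $[Z_0,Z_1,Z_2]$. *)

theory Defs
  imports "HOL-Analysis.Analysis"
begin

text \<open>We work in the affine chart Z0 = 1 of CP^2, i.e. C^2 = complex \<times> complex,
  which contains the whole hypersurface. Hermitian product on C^2.\<close>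
definition herm :: "complex \<times> complex \<Rightarrow> complex \<times> complex \<Rightarrow> complex" where
  "herm u v = fst u * cnj (fst v) + snd u * cnj (snd v)"

text \<open>Fubini-Study metric in the affine chart (real part of the Hermitian metric
  induced from unitary homogeneous coordinates [1,z1,z2]): g_z(u,v).\<close>
definition FS :: "complex \<times> complex \<Rightarrow> complex \<times> complex \<Rightarrow> complex \<times> complex \<Rightarrow> real" where
  "FS z u v = Re (((1 + herm z z) * herm u v - herm u z * herm z v) / (1 + herm z z)^2)"

definition dFS :: "complex \<times> complex \<Rightarrow> complex \<times> complex \<Rightarrow> complex \<times> complex \<Rightarrow> complex \<times> complex \<Rightarrow> real" where
  "dFS z u v w = deriv (\<lambda>t. FS (z + t *\<^sub>R u) v w) 0"

definition pd :: "3 \<Rightarrow> (real^3 \<Rightarrow> complex \<times> complex) \<Rightarrow> real^3 \<Rightarrow> complex \<times> complex" where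
  "pd i f p = vector_derivative (\<lambda>h. f (p + h *\<^sub>R axis i 1)) (at 0)"

definition ind_metric :: "(real^3 \<Rightarrow> complex \<times> complex) \<Rightarrow> real^3 \<Rightarrow> real^3^3" where
  "ind_metric f p = (\<chi> a b. FS (f p) (pd a f p) (pd b f p))"

text \<open>Second fundamental form paired with a vector n:
  g(\<nabla>_{\<partial>a} \<partial>_b f, n), with the Levi-Civita connection of FS given by the Koszul formula.\<close>
definition second_ff :: "(real^3 \<Rightarrow> complex \<times> complex) \<Rightarrow> real^3 \<Rightarrow> complex \<times> complex \<Rightarrow> 3 \<Rightarrow> 3 \<Rightarrow> real" where
  "second_ff f p n a b =
     FS (f p) (pd a (pd b f) p) n
     + (dFS (f p) (pd a f p) (pd b f p) n + dFS (f p) (pd b f p) (pd a f p) n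
        - dFS (f p) n (pd a f p) (pd b f p)) / 2"

definition mean_curv :: "(real^3 \<Rightarrow> complex \<times> complex) \<Rightarrow> real^3 \<Rightarrow> complex \<times> complex \<Rightarrow> real" where
  "mean_curv f p n = (\<Sum>a\<in>UNIV. \<Sum>b\<in>UNIV. matrix_inv (ind_metric f p) $ a $ b * second_ff f p n a b)"

definition minimal_param :: "(real^3 \<Rightarrow> complex \<times> complex) \<Rightarrow> (real^3) set \<Rightarrow> bool" where
  "minimal_param f U \<longleftrightarrow>
     (\<forall>p\<in>U. \<forall>n. (\<forall>a. FS (f p) n (pd a f p) = 0) \<longrightarrow> mean_curv f p n = 0)"

definition smooth_on :: "(real \<Rightarrow> real) \<Rightarrow> real set \<Rightarrow> bool" where
  "smooth_on g I \<longleftrightarrow> (\<forall>k. \<forall>r\<in>I. ((deriv ^^ k) g) field_differentiable (at r))"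

text \<open>The parametrization (s,t,r) \<mapsto> [1, e^{w+x(r)+iy(r)}, e^{\<lambda> w}], w = s + i t.\<close>
definition sigma :: "real \<Rightarrow> (real \<Rightarrow> real) \<Rightarrow> (real \<Rightarrow> real) \<Rightarrow> real^3 \<Rightarrow> complex \<times> complex" where
  "sigma lam x y p =
     (exp (Complex (p$1) (p$2) + Complex (x (p$3)) (y (p$3))),
      exp (complex_of_real lam * Complex (p$1) (p$2)))"

end

theory Submission
  imports Defs "HOL-Real_Asymp.Real_Asymp"
begin

(* Sigma is a real hypersurface, so at each point its normal space is a real line and minimality
   means that the second fundamental form, paired with one normal vector n0, has zero trace.
   In the affine chart the Levi-Civita connection of Fubini-Study differs from the flat one by
   Gamma(X, Y) = -(<X, z> Y + <Y, z> X) / (1 + |z|^2) (Koszul formula), and in the frame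
   ((sigma_1, 0), (0, sigma_2)) all first and second derivatives of the parametrization have
   coefficients depending only on A = |sigma_1|^2, B = |sigma_2|^2 and the curve x + i y.
   The leaves w |-> sigma(w, r) are complex curves and drop out of the trace, which leaves

     curv_poly(A, B) (x'^2 + y'^2) y' + speed_poly(A, B)^2 (x' y'' - x'' y') = 0.

   If y is constant every term vanishes. Otherwise fix r with y'(r) <> 0 and let w run along the
   real axis: then (A, B) = (exp (2 s + 2 x(r)), exp (2 lam s)) and curv_poly / speed_poly^2 would
   be constant in s. Depending on lam its limit at +oo or -oo is -lam, 1 or -lam / (lam - 1), and a
   polynomial sign argument shows that this value is never attained. *)

section \<open>The Fubini--Study metric in the affine chart\<close>

lemma herm_add_left: "herm (u + u') v = herm u v + herm u' v"
  by (simp add: herm_def algebra_simps)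

lemma herm_add_right: "herm u (v + v') = herm u v + herm u v'"
  by (simp add: herm_def algebra_simps)

lemma herm_scaleR_left: "herm (t *\<^sub>R u) v = of_real t * herm u v"
  by (simp add: herm_def scaleR_conv_of_real algebra_simps)

lemma herm_scaleR_right: "herm u (t *\<^sub>R v) = of_real t * herm u v"
  by (simp add: herm_def scaleR_conv_of_real algebra_simps)

lemma cnj_herm: "cnj (herm u v) = herm v u"
  by (simp add: herm_def)

lemma herm_self: "herm z z = of_real ((cmod (fst z))\<^sup>2 + (cmod (snd z))\<^sup>2)"
  by (simp only: herm_def of_real_add complex_norm_square)

lemma one_plus_herm_self_nonzero: "1 + herm z z \<noteq> 0"
proof -
  have "1 + herm z z = of_real (1 + ((cmod (fst z))\<^sup>2 + (cmod (snd z))\<^sup>2))"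
    by (simp add: herm_self)
  moreover have "1 + ((cmod (fst z))\<^sup>2 + (cmod (snd z))\<^sup>2) > 0"
    by (simp add: add_pos_nonneg)
  ultimately show ?thesis
    by (metis of_real_eq_0_iff order_less_irrefl)
qed

lemma cnj_one_plus_herm_self: "cnj (1 + herm z z) = 1 + herm z z"
  by (simp add: cnj_herm)

definition fs_herm :: "complex \<times> complex \<Rightarrow> complex \<times> complex \<Rightarrow> complex \<times> complex \<Rightarrow> complex" where
  "fs_herm z u v = ((1 + herm z z) * herm u v - herm u z * herm z v) / (1 + herm z z)\<^sup>2"

lemma FS_eq_Re_fs_herm: "FS z u v = Re (fs_herm z u v)"
  by (simp add: FS_def fs_herm_def)

lemma cnj_fs_herm: "cnj (fs_herm z u v) = fs_herm z v u"
  unfolding fs_herm_def by (simp add: cnj_herm cnj_one_plus_herm_self mult.commute)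

lemma FS_commute: "FS z u v = FS z v u"
  unfolding FS_eq_Re_fs_herm by (subst cnj_fs_herm[symmetric]) simp

lemma dFS_eq:
  "dFS z u v w = Re (((herm u z + herm z u) * herm v w - (herm v z * herm u w + herm v u * herm z w))
       / (1 + herm z z)\<^sup>2
     - 2 * (herm u z + herm z u) * ((1 + herm z z) * herm v w - herm v z * herm z w) / (1 + herm z z)^3)"
proof -
  define N0 N1 N2 where "N0 = 1 + herm z z" and "N1 = herm u z + herm z u" and "N2 = herm u u"
  define a b a' b' c where "a = herm v z" and "b = herm v u" and "a' = herm z w" and "b' = herm u w"
    and "c = herm v w"
  define G where "G \<zeta> = ((N0 + \<zeta> * N1 + \<zeta>\<^sup>2 * N2) * c - (a + \<zeta> * b) * (a' + \<zeta> * b'))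
      / (N0 + \<zeta> * N1 + \<zeta>\<^sup>2 * N2)\<^sup>2" for \<zeta>
  have FS_on_line: "FS (z + t *\<^sub>R u) v w = Re (G (of_real t))" for t
    unfolding FS_def G_def N0_def N1_def N2_def a_def b_def a'_def b'_def c_def
    by (simp add: herm_add_left herm_add_right herm_scaleR_left herm_scaleR_right power2_eq_square
        algebra_simps)
  have N0: "N0 \<noteq> 0"
    unfolding N0_def by (rule one_plus_herm_self_nonzero)
  have numer: "((\<lambda>\<zeta>. (N0 + \<zeta> * N1 + \<zeta>\<^sup>2 * N2) * c - (a + \<zeta> * b) * (a' + \<zeta> * b'))
      has_field_derivative (N1 * c - (a * b' + b * a'))) (at 0)"
    by (auto intro!: derivative_eq_intros simp: algebra_simps)
  have denom: "((\<lambda>\<zeta>. (N0 + \<zeta> * N1 + \<zeta>\<^sup>2 * N2)\<^sup>2) has_field_derivative (2 * N0 * N1)) (at 0)"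
    by (auto intro!: derivative_eq_intros simp: algebra_simps)
  have "(G has_field_derivative
      ((N1 * c - (a * b' + b * a')) * N0\<^sup>2 - (N0 * c - a * a') * (2 * N0 * N1)) / (N0\<^sup>2 * N0\<^sup>2))
      (at (of_real 0))"
    unfolding G_def[abs_def] using DERIV_divide[OF numer denom] N0 by (simp add: power2_eq_square)
  also have "((N1 * c - (a * b' + b * a')) * N0\<^sup>2 - (N0 * c - a * a') * (2 * N0 * N1)) / (N0\<^sup>2 * N0\<^sup>2)
     = (N1 * c - (a * b' + b * a')) / N0\<^sup>2 - 2 * N1 * (N0 * c - a * a') / N0^3"
    using N0 by (simp add: field_simps power2_eq_square power3_eq_cube)
  finally show ?thesis
    unfolding dFS_def FS_on_line N0_def N1_def a_def b_def a'_def b'_def c_def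
    by (intro DERIV_imp_deriv has_field_derivative_Re has_vector_derivative_real_field)
qed

definition cscale :: "complex \<Rightarrow> complex \<times> complex \<Rightarrow> complex \<times> complex" where
  "cscale a u = (a * fst u, a * snd u)"

lemma herm_cscale_left: "herm (cscale a u) v = a * herm u v"
  by (simp add: herm_def cscale_def algebra_simps)

lemma herm_cscale_right: "herm u (cscale a v) = cnj a * herm u v"
  by (simp add: herm_def cscale_def algebra_simps)

definition fs_christoffel :: "complex \<times> complex \<Rightarrow> complex \<times> complex \<Rightarrow> complex \<times> complex \<Rightarrow> complex \<times> complex" where
  "fs_christoffel z X Y = cscale (- 1 / (1 + herm z z)) (cscale (herm X z) Y + cscale (herm Y z) X)"

lemma koszul_fs_christoffel:
  "(dFS z X Y n + dFS z Y X n - dFS z n X Y) / 2 = FS z (fs_christoffel z X Y) n"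
proof -
  have Re_eq: "complex_of_real (Re w) = (w + cnj w) / 2" for w
    by (simp add: complex_add_cnj)
  have "complex_of_real ((dFS z X Y n + dFS z Y X n - dFS z n X Y) / 2)
      = complex_of_real (FS z (fs_christoffel z X Y) n)"
    unfolding dFS_eq FS_eq_Re_fs_herm fs_herm_def fs_christoffel_def of_real_add of_real_diff
      of_real_divide Re_eq
    using one_plus_herm_self_nonzero[of z]
    by (simp add: herm_cscale_left herm_add_left herm_add_right herm_cscale_right cnj_herm
        cnj_one_plus_herm_self divide_simps) algebra
  then show ?thesis
    by (rule of_real_eq_iff[THEN iffD1])
qed

lemma second_ff_eq_christoffel:
  "second_ff f p n a b
     = FS (f p) (pd a (pd b f) p) n + FS (f p) (fs_christoffel (f p) (pd a f p) (pd b f p)) n"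
  unfolding second_ff_def koszul_fs_christoffel ..

section \<open>Coordinates in a diagonal frame\<close>

definition fs_frame :: "real \<Rightarrow> real \<Rightarrow> complex \<Rightarrow> complex \<Rightarrow> complex \<Rightarrow> complex \<Rightarrow> complex" where
  "fs_frame A B \<alpha> \<beta> \<gamma> \<delta> = (of_real (A * (1 + B)) * \<alpha> * cnj \<gamma> + of_real (B * (1 + A)) * \<beta> * cnj \<delta>
      - of_real (A * B) * (\<alpha> * cnj \<delta> + \<beta> * cnj \<gamma>)) / of_real ((1 + A + B)\<^sup>2)"

lemma fs_frame_linear:
  "fs_frame A B \<alpha> \<beta> \<gamma> \<delta> =
     \<alpha> * ((of_real (A * (1 + B)) * cnj \<gamma> - of_real (A * B) * cnj \<delta>) / of_real ((1 + A + B)\<^sup>2))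
   + \<beta> * ((of_real (B * (1 + A)) * cnj \<delta> - of_real (A * B) * cnj \<gamma>) / of_real ((1 + A + B)\<^sup>2))"
  unfolding fs_frame_def
  by (cases "complex_of_real ((1 + A + B)\<^sup>2) = 0") (simp_all add: field_simps del: of_real_power)

lemma cnj_eq_norm_sq_divide: "a \<noteq> 0 \<Longrightarrow> cnj a = of_real ((cmod a)\<^sup>2) / a"
  by (metis complex_norm_square mult.commute nonzero_mult_div_cancel_left)

lemma one_plus_sq_norms_nonzero: "complex_of_real (1 + (cmod a1)\<^sup>2 + (cmod a2)\<^sup>2) \<noteq> 0"
  by (metis add_pos_nonneg of_real_eq_0_iff order_less_irrefl zero_le_power2
      zero_less_one)

lemma fs_herm_frame:
  assumes "a1 \<noteq> 0" "a2 \<noteq> 0"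
  shows "fs_herm (a1, a2) (\<alpha> * a1, \<beta> * a2) (\<gamma> * a1, \<delta> * a2)
    = fs_frame ((cmod a1)\<^sup>2) ((cmod a2)\<^sup>2) \<alpha> \<beta> \<gamma> \<delta>"
proof -
  define A B where "A = (cmod a1)\<^sup>2" and "B = (cmod a2)\<^sup>2"
  have cnj_a: "cnj a1 = of_real A / a1" "cnj a2 = of_real B / a2"
    using assms unfolding A_def B_def by (simp_all add: cnj_eq_norm_sq_divide)
  have "1 + (of_real A + of_real B) \<noteq> (0::complex)"
    using one_plus_sq_norms_nonzero[of a1 a2] by (simp add: A_def B_def add.assoc)
  then show ?thesis
    unfolding fs_herm_def herm_def fs_frame_def A_def[symmetric] B_def[symmetric]
    using assms by (simp add: cnj_a field_simps power2_eq_square)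
qed

lemma fs_christoffel_frame:
  assumes "a1 \<noteq> 0" "a2 \<noteq> 0"
  shows "fs_christoffel (a1, a2) (\<alpha> * a1, \<beta> * a2) (\<gamma> * a1, \<delta> * a2) =
    ((- ((\<alpha> * of_real ((cmod a1)\<^sup>2) + \<beta> * of_real ((cmod a2)\<^sup>2)) * \<gamma>
         + (\<gamma> * of_real ((cmod a1)\<^sup>2) + \<delta> * of_real ((cmod a2)\<^sup>2)) * \<alpha>)
        / of_real (1 + (cmod a1)\<^sup>2 + (cmod a2)\<^sup>2)) * a1,
     (- ((\<alpha> * of_real ((cmod a1)\<^sup>2) + \<beta> * of_real ((cmod a2)\<^sup>2)) * \<delta>
         + (\<gamma> * of_real ((cmod a1)\<^sup>2) + \<delta> * of_real ((cmod a2)\<^sup>2)) * \<beta>)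
        / of_real (1 + (cmod a1)\<^sup>2 + (cmod a2)\<^sup>2)) * a2)"
proof -
  define A B where "A = (cmod a1)\<^sup>2" and "B = (cmod a2)\<^sup>2"
  have cnj_a: "cnj a1 = of_real A / a1" "cnj a2 = of_real B / a2"
    using assms unfolding A_def B_def by (simp_all add: cnj_eq_norm_sq_divide)
  have "1 + (of_real A + of_real B) \<noteq> (0::complex)"
    using one_plus_sq_norms_nonzero[of a1 a2] by (simp add: A_def B_def add.assoc)
  then show ?thesis
    unfolding fs_christoffel_def herm_def cscale_def A_def[symmetric] B_def[symmetric]
    using assms by (simp add: cnj_a field_simps)
qed

section \<open>Derivatives of the parametrization\<close>

lemma smooth_on_has_real_derivative:
  "smooth_on f I \<Longrightarrow> r \<in> I \<Longrightarrow> (f has_real_derivative deriv f r) (at r)"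
  unfolding smooth_on_def by (metis DERIV_deriv_iff_field_differentiable funpow_0)

lemma smooth_on_deriv_has_real_derivative:
  "smooth_on f I \<Longrightarrow> r \<in> I \<Longrightarrow> (deriv f has_real_derivative deriv (deriv f) r) (at r)"
  unfolding smooth_on_def
  by (metis DERIV_deriv_iff_field_differentiable funpow_0 funpow_Suc_right o_apply One_nat_def)

lemma deriv_eq_0_if_constant_on:
  fixes f :: "real \<Rightarrow> real"
  assumes "open I" "\<forall>r\<in>I. f r = c" "r \<in> I"
  shows "deriv f r = 0"
proof -
  have "((\<lambda>_. c) has_real_derivative 0) (at r)"
    by simp
  then have "(f has_real_derivative 0) (at r)"
    by (rule has_field_derivative_transform_within_open[OF _ assms(1,3)]) (simp add: assms(2))
  then show ?thesis
    by (rule DERIV_imp_deriv)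
qed

lemma constant_on_if_deriv_eq_0:
  fixes f :: "real \<Rightarrow> real"
  assumes "is_interval I" "\<And>r. r \<in> I \<Longrightarrow> (f has_real_derivative deriv f r) (at r)"
    and "\<forall>r\<in>I. deriv f r = 0"
  shows "\<exists>c. \<forall>r\<in>I. f r = c"
proof -
  have "(f has_real_derivative 0) (at r within I)" if "r \<in> I" for r
    using assms(2,3) that by (metis has_field_derivative_at_within)
  then show ?thesis
    by (intro has_field_derivative_zero_constant is_interval_convex assms(1))
qed

definition wcoord :: "real^3 \<Rightarrow> complex" where
  "wcoord p = Complex (p$1) (p$2)"

definition sigma_fst :: "(real \<Rightarrow> real) \<Rightarrow> (real \<Rightarrow> real) \<Rightarrow> real^3 \<Rightarrow> complex" where
  "sigma_fst x y p = exp (wcoord p + Complex (x (p$3)) (y (p$3)))"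

definition sigma_snd :: "real \<Rightarrow> real^3 \<Rightarrow> complex" where
  "sigma_snd lam p = exp (of_real lam * wcoord p)"

definition curve_vel :: "(real \<Rightarrow> real) \<Rightarrow> (real \<Rightarrow> real) \<Rightarrow> real \<Rightarrow> complex" where
  "curve_vel x y r = Complex (deriv x r) (deriv y r)"

definition curve_acc :: "(real \<Rightarrow> real) \<Rightarrow> (real \<Rightarrow> real) \<Rightarrow> real \<Rightarrow> complex" where
  "curve_acc x y r = Complex (deriv (deriv x) r) (deriv (deriv y) r)"

lemma sigma_eq: "sigma lam x y = (\<lambda>q. (sigma_fst x y q, sigma_snd lam q))"
  by (simp add: fun_eq_iff sigma_def sigma_fst_def sigma_snd_def wcoord_def)

lemma norm_sigma_fst_real_axis: "(cmod (sigma_fst x y (vector [s, 0, r])))\<^sup>2 = exp (2 * s + 2 * x r)"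
proof -
  have "cmod (sigma_fst x y (vector [s, 0, r])) = exp (s + x r)"
    by (simp add: sigma_fst_def wcoord_def)
  then show ?thesis
    by (simp add: power2_eq_square flip: exp_add)
qed

lemma norm_sigma_snd_real_axis: "(cmod (sigma_snd lam (vector [s, 0, r])))\<^sup>2 = exp (2 * lam * s)"
proof -
  have "cmod (sigma_snd lam (vector [s, 0, r])) = exp (lam * s)"
    by (simp add: sigma_snd_def wcoord_def)
  then show ?thesis
    by (simp add: power2_eq_square flip: exp_add)
qed

lemma vec_line_nth: "(p + h *\<^sub>R axis a 1) $ j = p $ j + (if j = a then h else 0)"
  by (simp add: axis_def)

lemma wcoord_line1: "wcoord (p + h *\<^sub>R axis 1 1) = wcoord p + of_real h"
  unfolding wcoord_def vec_line_nth by (simp add: complex_eq_iff)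

lemma wcoord_line2: "wcoord (p + h *\<^sub>R axis 2 1) = wcoord p + \<i> * of_real h"
  unfolding wcoord_def vec_line_nth by (simp add: complex_eq_iff)

lemma wcoord_line3: "wcoord (p + h *\<^sub>R axis 3 1) = wcoord p"
  unfolding wcoord_def vec_line_nth by simp

lemma nth3_line1: "(p + h *\<^sub>R axis 1 1) $ 3 = (p::real^3) $ 3"
  unfolding vec_line_nth by simp

lemma nth3_line2: "(p + h *\<^sub>R axis 2 1) $ 3 = (p::real^3) $ 3"
  unfolding vec_line_nth by simp

lemma nth3_line3: "(p + h *\<^sub>R axis 3 1) $ 3 = (p::real^3) $ 3 + h"
  unfolding vec_line_nth by simp

lemma has_vector_derivative_of_real_arg:
  "(F has_field_derivative D) (at 0) \<Longrightarrow> ((\<lambda>h. F (of_real h)) has_vector_derivative D) (at 0)"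
  using has_vector_derivative_real_field[of F D 0 UNIV] by simp

lemma has_real_derivative_shift_0:
  "(f has_real_derivative f') (at r) \<Longrightarrow> ((\<lambda>h. f (r + h)) has_real_derivative f') (at 0)"
  using DERIV_shift[of f f' 0 r] by (simp add: add.commute)

lemma sigma_fst_deriv1:
  "((\<lambda>h. sigma_fst x y (p + h *\<^sub>R axis 1 1)) has_vector_derivative sigma_fst x y p) (at 0)"
proof -
  have "((\<lambda>\<zeta>. exp (wcoord p + \<zeta> + Complex (x (p$3)) (y (p$3)))) has_field_derivative
          exp (wcoord p + 0 + Complex (x (p$3)) (y (p$3)))) (at 0)"
    by (auto intro!: derivative_eq_intros)
  from has_vector_derivative_of_real_arg[OF this] show ?thesis
    unfolding sigma_fst_def wcoord_line1 nth3_line1 by simp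
qed

lemma sigma_fst_deriv2:
  "((\<lambda>h. sigma_fst x y (p + h *\<^sub>R axis 2 1)) has_vector_derivative \<i> * sigma_fst x y p) (at 0)"
proof -
  have "((\<lambda>\<zeta>. exp (wcoord p + \<i> * \<zeta> + Complex (x (p$3)) (y (p$3)))) has_field_derivative
          exp (wcoord p + \<i> * 0 + Complex (x (p$3)) (y (p$3))) * (\<i> * 1)) (at 0)"
    by (auto intro!: derivative_eq_intros)
  from has_vector_derivative_of_real_arg[OF this] show ?thesis
    unfolding sigma_fst_def wcoord_line2 nth3_line2 by (simp add: mult.commute)
qed

lemma sigma_fst_deriv3:
  assumes "(x has_real_derivative x') (at (p$3))" "(y has_real_derivative y') (at (p$3))"
  shows "((\<lambda>h. sigma_fst x y (p + h *\<^sub>R axis 3 1)) has_vector_derivative Complex x' y' * sigma_fst x y p)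
    (at 0)"
proof -
  define g where "g = (\<lambda>h. wcoord p + Complex (x (p$3 + h)) (y (p$3 + h)))"
  have "(g has_vector_derivative Complex x' y') (at 0)"
    unfolding has_vector_derivative_complex_iff g_def
    using has_real_derivative_shift_0[OF assms(1)] has_real_derivative_shift_0[OF assms(2)]
    by (auto intro!: derivative_eq_intros)
  then have "((exp \<circ> g) has_vector_derivative (Complex x' y' * exp (g 0))) (at 0)"
    by (rule field_vector_diff_chain_at) (rule DERIV_exp)
  then show ?thesis
    unfolding sigma_fst_def wcoord_line3 nth3_line3 by (simp add: g_def o_def)
qed

lemma sigma_snd_deriv1:
  "((\<lambda>h. sigma_snd lam (p + h *\<^sub>R axis 1 1)) has_vector_derivative of_real lam * sigma_snd lam p) (at 0)"
proof -
  have "((\<lambda>\<zeta>. exp (of_real lam * (wcoord p + \<zeta>))) has_field_derivative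
          exp (of_real lam * (wcoord p + 0)) * (of_real lam * 1)) (at 0)"
    by (auto intro!: derivative_eq_intros)
  from has_vector_derivative_of_real_arg[OF this] show ?thesis
    unfolding sigma_snd_def wcoord_line1 by (simp add: mult.commute)
qed

lemma sigma_snd_deriv2:
  "((\<lambda>h. sigma_snd lam (p + h *\<^sub>R axis 2 1)) has_vector_derivative \<i> * of_real lam * sigma_snd lam p)
    (at 0)"
proof -
  have "((\<lambda>\<zeta>. exp (of_real lam * (wcoord p + \<i> * \<zeta>))) has_field_derivative
          exp (of_real lam * (wcoord p + \<i> * 0)) * (of_real lam * (\<i> * 1))) (at 0)"
    by (auto intro!: derivative_eq_intros)
  from has_vector_derivative_of_real_arg[OF this] show ?thesis
    unfolding sigma_snd_def wcoord_line2 by (simp add: mult.commute mult.left_commute)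
qed

lemma sigma_snd_deriv3: "((\<lambda>h. sigma_snd lam (p + h *\<^sub>R axis 3 1)) has_vector_derivative 0) (at 0)"
  unfolding sigma_snd_def wcoord_line3 by simp

lemma curve_vel_deriv3:
  assumes "(deriv x has_real_derivative deriv (deriv x) (p$3)) (at (p$3))"
    and "(deriv y has_real_derivative deriv (deriv y) (p$3)) (at (p$3))"
  shows "((\<lambda>h. curve_vel x y (((p::real^3) + h *\<^sub>R axis 3 1)$3)) has_vector_derivative curve_acc x y (p$3))
    (at 0)"
  unfolding nth3_line3 curve_vel_def curve_acc_def has_vector_derivative_complex_iff
  using has_real_derivative_shift_0[OF assms(1)] has_real_derivative_shift_0[OF assms(2)] by simp

lemma pd_eqI: "((\<lambda>h. g (p + h *\<^sub>R axis a 1)) has_vector_derivative D) (at 0) \<Longrightarrow> pd a g p = D"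
  unfolding pd_def by (rule vector_derivative_at)

lemma pd_eqI_open:
  assumes "open S" "p \<in> S" "\<And>q. q \<in> S \<Longrightarrow> g q = g' q"
    and "((\<lambda>h. g' (p + h *\<^sub>R axis a 1)) has_vector_derivative D) (at 0)"
  shows "pd a g p = D"
proof (rule pd_eqI)
  have "open ((\<lambda>h. p + h *\<^sub>R axis a 1) -` S)"
    by (rule continuous_open_vimage[OF assms(1)]) (auto intro!: continuous_intros)
  then show "((\<lambda>h. g (p + h *\<^sub>R axis a 1)) has_vector_derivative D) (at 0)"
    by (rule has_vector_derivative_transform_within_open[OF assms(4)]) (use assms in auto)
qed

lemma pd1_sigma: "pd 1 (sigma lam x y) q = (sigma_fst x y q, of_real lam * sigma_snd lam q)"
  unfolding sigma_eq by (intro pd_eqI has_vector_derivative_Pair sigma_fst_deriv1 sigma_snd_deriv1)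

lemma pd2_sigma: "pd 2 (sigma lam x y) q = (\<i> * sigma_fst x y q, \<i> * of_real lam * sigma_snd lam q)"
  unfolding sigma_eq by (intro pd_eqI has_vector_derivative_Pair sigma_fst_deriv2 sigma_snd_deriv2)

lemma pd3_sigma:
  assumes "(x has_real_derivative deriv x (q$3)) (at (q$3))"
    and "(y has_real_derivative deriv y (q$3)) (at (q$3))"
  shows "pd 3 (sigma lam x y) q = (curve_vel x y (q$3) * sigma_fst x y q, 0)"
  unfolding sigma_eq curve_vel_def
  by (intro pd_eqI has_vector_derivative_Pair sigma_fst_deriv3 sigma_snd_deriv3 assms)

lemma pd11_sigma:
  "pd 1 (pd 1 (sigma lam x y)) p = (sigma_fst x y p, of_real lam * (of_real lam * sigma_snd lam p))"
  unfolding pd1_sigma[abs_def]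
  by (intro pd_eqI has_vector_derivative_Pair sigma_fst_deriv1 sigma_snd_deriv1
      has_vector_derivative_mult_right)

lemma pd21_sigma:
  "pd 2 (pd 1 (sigma lam x y)) p = (\<i> * sigma_fst x y p, of_real lam * (\<i> * of_real lam * sigma_snd lam p))"
  unfolding pd1_sigma[abs_def]
  by (intro pd_eqI has_vector_derivative_Pair sigma_fst_deriv2 sigma_snd_deriv2
      has_vector_derivative_mult_right)

lemma pd12_sigma:
  "pd 1 (pd 2 (sigma lam x y)) p = (\<i> * sigma_fst x y p, \<i> * of_real lam * (of_real lam * sigma_snd lam p))"
  unfolding pd2_sigma[abs_def]
  by (intro pd_eqI has_vector_derivative_Pair sigma_fst_deriv1 sigma_snd_deriv1
      has_vector_derivative_mult_right)

lemma pd22_sigma: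
  "pd 2 (pd 2 (sigma lam x y)) p
     = (\<i> * (\<i> * sigma_fst x y p), \<i> * of_real lam * (\<i> * of_real lam * sigma_snd lam p))"
  unfolding pd2_sigma[abs_def]
  by (intro pd_eqI has_vector_derivative_Pair sigma_fst_deriv2 sigma_snd_deriv2
      has_vector_derivative_mult_right)

section \<open>Inverting the induced metric\<close>

definition sym3 :: "real \<Rightarrow> real \<Rightarrow> real \<Rightarrow> real \<Rightarrow> real \<Rightarrow> real \<Rightarrow> real^3^3" where
  "sym3 a11 a12 a13 a22 a23 a33 = (\<chi> i j.
      if i = 1 then (if j = 1 then a11 else if j = 2 then a12 else a13)
      else if i = 2 then (if j = 1 then a12 else if j = 2 then a22 else a23)
      else (if j = 1 then a13 else if j = 2 then a23 else a33))"

lemma sym3_nth: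
  "sym3 a11 a12 a13 a22 a23 a33 $ 1 $ 1 = a11" "sym3 a11 a12 a13 a22 a23 a33 $ 1 $ 2 = a12"
  "sym3 a11 a12 a13 a22 a23 a33 $ 1 $ 3 = a13" "sym3 a11 a12 a13 a22 a23 a33 $ 2 $ 1 = a12"
  "sym3 a11 a12 a13 a22 a23 a33 $ 2 $ 2 = a22" "sym3 a11 a12 a13 a22 a23 a33 $ 2 $ 3 = a23"
  "sym3 a11 a12 a13 a22 a23 a33 $ 3 $ 1 = a13" "sym3 a11 a12 a13 a22 a23 a33 $ 3 $ 2 = a23"
  "sym3 a11 a12 a13 a22 a23 a33 $ 3 $ 3 = a33"
  by (simp_all add: sym3_def)

lemma matrix_inv_eqI:
  fixes A M :: "'a::comm_ring_1^'n^'n"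
  assumes "A ** M = mat 1" "M ** A = mat 1"
  shows "matrix_inv A = M"
proof -
  have "\<exists>A'. A ** A' = mat 1 \<and> A' ** A = mat 1"
    using assms by blast
  then have inv: "A ** matrix_inv A = mat 1 \<and> matrix_inv A ** A = mat 1"
    unfolding matrix_inv_def by (rule someI_ex)
  have "matrix_inv A = matrix_inv A ** (A ** M)"
    by (simp add: assms(1) matrix_mul_rid)
  also have "\<dots> = (matrix_inv A ** A) ** M"
    by (rule matrix_mul_assoc)
  also have "\<dots> = M"
    using inv by (simp add: matrix_mul_lid)
  finally show ?thesis .
qed

definition gram3 :: "real \<Rightarrow> real \<Rightarrow> real \<Rightarrow> real \<Rightarrow> real \<Rightarrow> real^3^3" where
  "gram3 P Q R u v = sym3 P 0 (u * Q) P (v * Q) ((u\<^sup>2 + v\<^sup>2) * R)"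

definition gram3_det :: "real \<Rightarrow> real \<Rightarrow> real \<Rightarrow> real \<Rightarrow> real \<Rightarrow> real" where
  "gram3_det P Q R u v = P * (u\<^sup>2 + v\<^sup>2) * (P * R - Q\<^sup>2)"

definition gram3_inv :: "real \<Rightarrow> real \<Rightarrow> real \<Rightarrow> real \<Rightarrow> real \<Rightarrow> real^3^3" where
  "gram3_inv P Q R u v = sym3
     ((P * (u\<^sup>2 + v\<^sup>2) * R - v\<^sup>2 * Q\<^sup>2) / gram3_det P Q R u v) (u * v * Q\<^sup>2 / gram3_det P Q R u v)
     (- u * Q * P / gram3_det P Q R u v) ((P * (u\<^sup>2 + v\<^sup>2) * R - u\<^sup>2 * Q\<^sup>2) / gram3_det P Q R u v)
     (- v * Q * P / gram3_det P Q R u v) (P\<^sup>2 / gram3_det P Q R u v)"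

lemma matrix_inv_gram3:
  assumes "P \<noteq> 0" "u\<^sup>2 + v\<^sup>2 \<noteq> 0" "P * R - Q\<^sup>2 \<noteq> 0"
  shows "matrix_inv (gram3 P Q R u v) = gram3_inv P Q R u v"
proof (rule matrix_inv_eqI)
  have D: "gram3_det P Q R u v \<noteq> 0"
    using assms by (simp add: gram3_det_def)
  show "gram3 P Q R u v ** gram3_inv P Q R u v = mat 1"
    unfolding matrix_matrix_mult_def vec_eq_iff forall_3 sum_3 mat_def gram3_def gram3_inv_def
    using D by (simp add: sym3_nth field_simps, simp add: gram3_det_def algebra_simps power2_eq_square)
  show "gram3_inv P Q R u v ** gram3 P Q R u v = mat 1"
    unfolding matrix_matrix_mult_def vec_eq_iff forall_3 sum_3 mat_def gram3_def gram3_inv_def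
    using D by (simp add: sym3_nth field_simps, simp add: gram3_det_def algebra_simps power2_eq_square)
qed

section \<open>A rational function that is not constant along the leaves\<close>

definition curv_poly :: "real \<Rightarrow> real \<Rightarrow> real \<Rightarrow> real" where
  "curv_poly lam A B = lam^4 * B\<^sup>2 - lam * A\<^sup>2 + lam * (1 - lam)^3 * A\<^sup>2 * B\<^sup>2"

definition speed_poly :: "real \<Rightarrow> real \<Rightarrow> real \<Rightarrow> real" where
  "speed_poly lam A B = A + lam\<^sup>2 * B + (lam - 1)\<^sup>2 * A * B"

definition curv_ratio :: "real \<Rightarrow> real \<Rightarrow> real \<Rightarrow> real" where
  "curv_ratio lam A B = curv_poly lam A B / (speed_poly lam A B)\<^sup>2"

lemma speed_poly_pos: "A > 0 \<Longrightarrow> B > 0 \<Longrightarrow> speed_poly lam A B > 0"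
  unfolding speed_poly_def by (intro add_pos_nonneg) auto

text \<open>\<open>curv_ratio\<close> with numerator and denominator divided by \<open>A\<^sup>2\<close>, \<open>B\<^sup>2\<close> and \<open>A\<^sup>2 B\<^sup>2\<close>
  respectively. Each version is continuous at the origin, and along the curve
  \<open>s \<mapsto> (exp (2 s + 2 c), exp (2 \<lambda> s))\<close> the arguments of one of them tend to \<open>0\<close> at \<open>+\<infinity>\<close>
  or \<open>-\<infinity>\<close>.\<close>

definition curv_ratio_chart1 :: "real \<Rightarrow> real \<Rightarrow> real \<Rightarrow> real" where
  "curv_ratio_chart1 lam t e =
     (lam^4 * t\<^sup>2 - lam + lam * (1 - lam)^3 * e\<^sup>2) / (1 + lam\<^sup>2 * t + (lam - 1)\<^sup>2 * e)\<^sup>2"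

definition curv_ratio_chart2 :: "real \<Rightarrow> real \<Rightarrow> real \<Rightarrow> real" where
  "curv_ratio_chart2 lam t e =
     (lam^4 - lam * t\<^sup>2 + lam * (1 - lam)^3 * e\<^sup>2) / (t + lam\<^sup>2 + (lam - 1)\<^sup>2 * e)\<^sup>2"

definition curv_ratio_chart3 :: "real \<Rightarrow> real \<Rightarrow> real \<Rightarrow> real" where
  "curv_ratio_chart3 lam t e =
     (lam^4 * t\<^sup>2 - lam * e\<^sup>2 + lam * (1 - lam)^3) / (e + lam\<^sup>2 * t + (lam - 1)\<^sup>2)\<^sup>2"

lemma curv_ratio_eq_chart1:
  assumes "A > 0" "B > 0"
  shows "curv_ratio lam A B = curv_ratio_chart1 lam (B / A) B"
proof -
  have "curv_poly lam A B = A\<^sup>2 * (lam^4 * (B/A)\<^sup>2 - lam + lam * (1 - lam)^3 * B\<^sup>2)"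
    unfolding curv_poly_def using assms by (simp add: field_simps power2_eq_square)
  moreover have "speed_poly lam A B = A * (1 + lam\<^sup>2 * (B/A) + (lam - 1)\<^sup>2 * B)"
    unfolding speed_poly_def using assms by (simp add: field_simps power2_eq_square)
  ultimately show ?thesis
    unfolding curv_ratio_def curv_ratio_chart1_def using assms by (simp add: power_mult_distrib)
qed

lemma curv_ratio_eq_chart2:
  assumes "A > 0" "B > 0"
  shows "curv_ratio lam A B = curv_ratio_chart2 lam (A / B) A"
proof -
  have "curv_poly lam A B = B\<^sup>2 * (lam^4 - lam * (A/B)\<^sup>2 + lam * (1 - lam)^3 * A\<^sup>2)"
    unfolding curv_poly_def using assms by (simp add: field_simps power2_eq_square)
  moreover have "speed_poly lam A B = B * (A/B + lam\<^sup>2 + (lam - 1)\<^sup>2 * A)"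
    unfolding speed_poly_def using assms by (simp add: field_simps power2_eq_square)
  ultimately show ?thesis
    unfolding curv_ratio_def curv_ratio_chart2_def using assms by (simp add: power_mult_distrib)
qed

lemma curv_ratio_eq_chart3:
  assumes "A > 0" "B > 0"
  shows "curv_ratio lam A B = curv_ratio_chart3 lam (1 / A) (1 / B)"
proof -
  have "curv_poly lam A B = (A*B)\<^sup>2 * (lam^4 * (1/A)\<^sup>2 - lam * (1/B)\<^sup>2 + lam * (1 - lam)^3)"
    unfolding curv_poly_def using assms by (simp add: field_simps power2_eq_square)
  moreover have "speed_poly lam A B = (A*B) * (1/B + lam\<^sup>2 * (1/A) + (lam - 1)\<^sup>2)"
    unfolding speed_poly_def using assms by (simp add: field_simps power2_eq_square)
  ultimately show ?thesis
    unfolding curv_ratio_def curv_ratio_chart3_def using assms by (simp add: power_mult_distrib)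
qed

lemma tendsto_curv_ratio_chart1:
  assumes "(f \<longlongrightarrow> 0) F" "(g \<longlongrightarrow> 0) F"
  shows "((\<lambda>s. curv_ratio_chart1 lam (f s) (g s)) \<longlongrightarrow> - lam) F"
proof -
  have "((\<lambda>s. curv_ratio_chart1 lam (f s) (g s)) \<longlongrightarrow> curv_ratio_chart1 lam 0 0) F"
    unfolding curv_ratio_chart1_def by (rule tendsto_divide) (rule tendsto_intros assms | simp)+
  then show ?thesis
    by (simp add: curv_ratio_chart1_def)
qed

lemma tendsto_curv_ratio_chart2:
  assumes "(f \<longlongrightarrow> 0) F" "(g \<longlongrightarrow> 0) F" "lam \<noteq> 0"
  shows "((\<lambda>s. curv_ratio_chart2 lam (f s) (g s)) \<longlongrightarrow> 1) F"
proof -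
  have "((\<lambda>s. curv_ratio_chart2 lam (f s) (g s)) \<longlongrightarrow> curv_ratio_chart2 lam 0 0) F"
    unfolding curv_ratio_chart2_def
    by (rule tendsto_divide) (rule tendsto_intros assms | use assms(3) in simp)+
  moreover have "curv_ratio_chart2 lam 0 0 = 1"
    using assms(3) by (simp add: curv_ratio_chart2_def flip: power_mult)
  ultimately show ?thesis
    by simp
qed

lemma tendsto_curv_ratio_chart3:
  assumes "(f \<longlongrightarrow> 0) F" "(g \<longlongrightarrow> 0) F" "lam \<noteq> 1"
  shows "((\<lambda>s. curv_ratio_chart3 lam (f s) (g s)) \<longlongrightarrow> - lam / (lam - 1)) F"
proof -
  have "((\<lambda>s. curv_ratio_chart3 lam (f s) (g s)) \<longlongrightarrow> curv_ratio_chart3 lam 0 0) F"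
    unfolding curv_ratio_chart3_def
    by (rule tendsto_divide) (rule tendsto_intros assms | use assms(3) in simp)+
  moreover have "curv_ratio_chart3 lam 0 0 = - lam / (lam - 1)"
  proof -
    have "(1 - lam)^3 = - ((lam - 1)^3)" and "((lam - 1)\<^sup>2)\<^sup>2 = (lam - 1)^3 * (lam - 1)"
      by (simp_all add: power3_eq_cube power2_eq_square algebra_simps)
    then show ?thesis
      using assms(3) by (simp add: curv_ratio_chart3_def)
  qed
  ultimately show ?thesis
    by simp
qed

lemma tendsto_curv_ratio_at_bot_gt_1:
  "lam > 1 \<Longrightarrow> ((\<lambda>s. curv_ratio lam (exp (2 * s + 2 * c)) (exp (2 * lam * s))) \<longlongrightarrow> - lam) at_bot"
  unfolding curv_ratio_eq_chart1[OF exp_gt_zero exp_gt_zero]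
  by (rule tendsto_curv_ratio_chart1; real_asymp)

lemma tendsto_curv_ratio_at_top_neg:
  "lam < 0 \<Longrightarrow> ((\<lambda>s. curv_ratio lam (exp (2 * s + 2 * c)) (exp (2 * lam * s))) \<longlongrightarrow> - lam) at_top"
  unfolding curv_ratio_eq_chart1[OF exp_gt_zero exp_gt_zero]
  by (rule tendsto_curv_ratio_chart1; real_asymp)

lemma tendsto_curv_ratio_at_bot_lt_1:
  "lam < 1 \<Longrightarrow> lam \<noteq> 0 \<Longrightarrow>
    ((\<lambda>s. curv_ratio lam (exp (2 * s + 2 * c)) (exp (2 * lam * s))) \<longlongrightarrow> 1) at_bot"
  unfolding curv_ratio_eq_chart2[OF exp_gt_zero exp_gt_zero]
  by (rule tendsto_curv_ratio_chart2; real_asymp?)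

lemma tendsto_curv_ratio_at_top_pos:
  "lam > 0 \<Longrightarrow> lam \<noteq> 1 \<Longrightarrow>
    ((\<lambda>s. curv_ratio lam (exp (2 * s + 2 * c)) (exp (2 * lam * s))) \<longlongrightarrow> - lam / (lam - 1)) at_top"
  unfolding curv_ratio_eq_chart3[OF exp_gt_zero exp_gt_zero]
  by (rule tendsto_curv_ratio_chart3; real_asymp?)

lemma power4_eq_mult: "(t::real)^4 = t * t * t * t"
  by (simp add: eval_nat_numeral)

lemma curv_ratio_gt_neg_lam:
  assumes "A > 0" "B > 0" "lam \<ge> 2"
  shows "curv_ratio lam A B > - lam"
proof -
  have "curv_poly lam A B + lam * (speed_poly lam A B)\<^sup>2
      = (1 + lam) * lam^4 * B\<^sup>2 + lam * (lam - 1)^3 * (lam - 2) * A\<^sup>2 * B\<^sup>2 + 2 * lam^3 * A * B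
        + 2 * lam * (lam - 1)\<^sup>2 * A\<^sup>2 * B + 2 * lam^3 * (lam - 1)\<^sup>2 * A * B\<^sup>2"
    unfolding curv_poly_def speed_poly_def
    by (simp add: power2_eq_square power3_eq_cube power4_eq_mult algebra_simps)
  also have "\<dots> > 0"
    using assms by (intro add_pos_nonneg add_nonneg_pos) auto
  finally show ?thesis
    using speed_poly_pos[OF assms(1,2), of lam] unfolding curv_ratio_def by (simp add: field_simps)
qed

lemma curv_ratio_lt_neg_lam:
  assumes "A > 0" "B > 0" "lam \<le> -1"
  shows "curv_ratio lam A B < - lam"
proof -
  have "curv_poly lam A B + lam * (speed_poly lam A B)\<^sup>2
      = (1 + lam) * lam^4 * B\<^sup>2 + lam * (lam - 1)^3 * (lam - 2) * A\<^sup>2 * B\<^sup>2 + 2 * lam^3 * A * B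
        + 2 * lam * (lam - 1)\<^sup>2 * A\<^sup>2 * B + 2 * lam^3 * (lam - 1)\<^sup>2 * A * B\<^sup>2"
    unfolding curv_poly_def speed_poly_def
    by (simp add: power2_eq_square power3_eq_cube power4_eq_mult algebra_simps)
  also have "\<dots> < 0"
  proof -
    have "lam^3 < 0" "(lam - 1)^3 < 0" "(1 + lam) * lam^4 \<le> 0"
      using assms by (simp_all add: mult_nonpos_nonneg)
    then have "lam * (lam - 1)^3 * (lam - 2) < 0"
      using assms by (simp add: mult_less_0_iff zero_less_mult_iff)
    with \<open>lam^3 < 0\<close> \<open>(1 + lam) * lam^4 \<le> 0\<close> show ?thesis
      using assms
      by (intro add_neg_neg add_nonpos_neg) (simp_all add: mult_less_0_iff mult_nonpos_nonneg)
  qed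
  finally show ?thesis
    using speed_poly_pos[OF assms(1,2), of lam] unfolding curv_ratio_def by (simp add: field_simps)
qed

lemma curv_ratio_mid_bound:
  assumes "A > 0" "B > 0" "lam > 1/2" "lam < 2"
  shows "(lam - 1) * curv_ratio lam A B + lam > 0"
proof -
  have "(lam - 1) * curv_poly lam A B + lam * (speed_poly lam A B)\<^sup>2
      = (2 * lam - 1) * lam^4 * B\<^sup>2 + lam * (2 - lam) * A\<^sup>2 + 2 * lam^3 * A * B
        + 2 * lam * (lam - 1)\<^sup>2 * A\<^sup>2 * B + 2 * lam^3 * (lam - 1)\<^sup>2 * A * B\<^sup>2"
    unfolding curv_poly_def speed_poly_def
    by (simp add: power2_eq_square power3_eq_cube power4_eq_mult algebra_simps)
  also have "\<dots> > 0"
    using assms by (intro add_pos_nonneg add_pos_pos) auto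
  finally show ?thesis
    using speed_poly_pos[OF assms(1,2), of lam] unfolding curv_ratio_def by (simp add: field_simps)
qed

lemma curv_ratio_lt_1:
  assumes "A > 0" "B > 0" "lam > -1" "lam \<le> 1/2"
  shows "curv_ratio lam A B < 1"
proof -
  have "curv_poly lam A B - (speed_poly lam A B)\<^sup>2
      = - ((lam + 1) * A\<^sup>2 + (lam - 1)^3 * (2 * lam - 1) * A\<^sup>2 * B\<^sup>2 + 2 * lam\<^sup>2 * A * B
           + 2 * (lam - 1)\<^sup>2 * A\<^sup>2 * B + 2 * lam\<^sup>2 * (lam - 1)\<^sup>2 * A * B\<^sup>2)"
    unfolding curv_poly_def speed_poly_def
    by (simp add: power2_eq_square power3_eq_cube power4_eq_mult algebra_simps)
  also have "\<dots> < 0"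
  proof -
    have "(lam - 1)^3 < 0"
      using assms by simp
    then have "(lam - 1)^3 * (2 * lam - 1) * A\<^sup>2 * B\<^sup>2 \<ge> 0"
      using assms by (simp add: zero_le_mult_iff)
    moreover have "(lam + 1) * A\<^sup>2 > 0" "2 * lam\<^sup>2 * A * B \<ge> 0" "2 * (lam - 1)\<^sup>2 * A\<^sup>2 * B \<ge> 0"
      "2 * lam\<^sup>2 * (lam - 1)\<^sup>2 * A * B\<^sup>2 \<ge> 0"
      using assms by simp_all
    ultimately show ?thesis
      by linarith
  qed
  finally show ?thesis
    using speed_poly_pos[OF assms(1,2), of lam] unfolding curv_ratio_def by (simp add: field_simps)
qed

lemma curv_ratio_nonconstant_on_leaf:
  assumes "lam \<noteq> 0" "lam \<noteq> 1"
  shows "\<exists>s. curv_ratio lam (exp (2 * s + 2 * c)) (exp (2 * lam * s)) \<noteq> C"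
proof (rule ccontr)
  assume "\<not> ?thesis"
  then have const: "(\<lambda>s. curv_ratio lam (exp (2 * s + 2 * c)) (exp (2 * lam * s))) = (\<lambda>_. C)"
    by auto
  have limit: "C = L" if "((\<lambda>s. curv_ratio lam (exp (2 * s + 2 * c)) (exp (2 * lam * s))) \<longlongrightarrow> L) F"
    and "F \<noteq> bot" for L F
    using that tendsto_const_iff unfolding const by blast
  have ratio_at_0: "curv_ratio lam (exp (2 * c)) 1 = C"
    using fun_cong[OF const, of 0] by simp
  have pos: "exp (2 * c) > 0" "(1::real) > 0"
    by simp_all
  consider "lam \<ge> 2" | "1/2 < lam \<and> lam < 2" | "-1 < lam \<and> lam \<le> 1/2" | "lam \<le> -1"
    by linarith
  then show False
  proof cases
    case 1
    then have "C = - lam"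
      by (intro limit[OF tendsto_curv_ratio_at_bot_gt_1]) simp_all
    with curv_ratio_gt_neg_lam[OF pos 1] ratio_at_0 show False
      by simp
  next
    case 2
    then have "C = - lam / (lam - 1)"
      using assms by (intro limit[OF tendsto_curv_ratio_at_top_pos]) simp_all
    then have "(lam - 1) * C + lam = 0"
      using assms by (simp add: field_simps)
    with curv_ratio_mid_bound[OF pos, of lam] 2 ratio_at_0 show False
      by simp
  next
    case 3
    then have "C = 1"
      using assms by (intro limit[OF tendsto_curv_ratio_at_bot_lt_1]) simp_all
    with curv_ratio_lt_1[OF pos, of lam] 3 ratio_at_0 show False
      by simp
  next
    case 4
    then have "C = - lam"
      by (intro limit[OF tendsto_curv_ratio_at_top_neg]) simp_all
    with curv_ratio_lt_neg_lam[OF pos 4] ratio_at_0 show False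
      by simp
  qed
qed

section \<open>Mean curvature at a point of the hypersurface\<close>

locale sigma_point =
  fixes I :: "real set" and lam :: real and x y :: "real \<Rightarrow> real" and p :: "real^3"
  assumes lam_nonzero: "lam \<noteq> 0" and open_I: "open I" and p_in_I: "p$3 \<in> I"
    and x_deriv: "\<And>r. r \<in> I \<Longrightarrow> (x has_real_derivative deriv x r) (at r)"
    and y_deriv: "\<And>r. r \<in> I \<Longrightarrow> (y has_real_derivative deriv y r) (at r)"
    and velocity_nonzero: "(deriv x (p$3), deriv y (p$3)) \<noteq> (0, 0)"
    and x_deriv2: "(deriv x has_real_derivative deriv (deriv x) (p$3)) (at (p$3))"
    and y_deriv2: "(deriv y has_real_derivative deriv (deriv y) (p$3)) (at (p$3))"
begin

definition "a1 = sigma_fst x y p"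
definition "a2 = sigma_snd lam p"
definition "A = (cmod a1)\<^sup>2"
definition "B = (cmod a2)\<^sup>2"
definition "NN = 1 + A + B"
definition "u = deriv x (p$3)"
definition "v = deriv y (p$3)"
definition "u2 = deriv (deriv x) (p$3)"
definition "v2 = deriv (deriv y) (p$3)"
definition "c = curve_vel x y (p$3)"
definition "d = curve_acc x y (p$3)"

text \<open>The entries of the induced metric: \<open>P = g(\<sigma>\<^sub>s, \<sigma>\<^sub>s) = g(\<sigma>\<^sub>t, \<sigma>\<^sub>t)\<close>,
  \<open>u Q = g(\<sigma>\<^sub>s, \<sigma>\<^sub>r)\<close>, \<open>v Q = g(\<sigma>\<^sub>t, \<sigma>\<^sub>r)\<close>, \<open>(u\<^sup>2 + v\<^sup>2) R = g(\<sigma>\<^sub>r, \<sigma>\<^sub>r)\<close>.\<close>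
definition "P = (A + lam\<^sup>2 * B + (lam - 1)\<^sup>2 * A * B) / NN\<^sup>2"
definition "Q = A * (1 + B - lam * B) / NN\<^sup>2"
definition "R = A * (1 + B) / NN\<^sup>2"

lemma frame_nonzero: "a1 \<noteq> 0" "a2 \<noteq> 0"
  by (simp_all add: a1_def a2_def sigma_fst_def sigma_snd_def)

lemma A_pos: "A > 0" and B_pos: "B > 0"
  using frame_nonzero by (simp_all add: A_def B_def)

lemma NN_pos: "NN > 0"
  using A_pos B_pos by (simp add: NN_def)

lemma NN_nonzero: "complex_of_real NN \<noteq> 0" "NN \<noteq> 0"
  using NN_pos by auto

lemma c_eq: "c = Complex u v"
  by (simp add: c_def curve_vel_def u_def v_def)

lemma d_eq: "d = Complex u2 v2"
  by (simp add: d_def curve_acc_def u2_def v2_def)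

lemma speed_pos: "u\<^sup>2 + v\<^sup>2 > 0"
  using velocity_nonzero unfolding u_def[symmetric] v_def[symmetric]
  by (simp add: sum_power2_gt_zero_iff)

lemma sigma_at_p: "sigma lam x y p = (a1, a2)"
  by (simp add: sigma_eq a1_def a2_def)

lemma pd_frame:
  "pd 1 (sigma lam x y) p = (1 * a1, of_real lam * a2)"
  "pd 2 (sigma lam x y) p = (\<i> * a1, (\<i> * of_real lam) * a2)"
  "pd 3 (sigma lam x y) p = (c * a1, 0 * a2)"
  by (simp_all add: pd1_sigma pd2_sigma pd3_sigma x_deriv y_deriv p_in_I a1_def a2_def c_def)

lemma open_slab: "open {q::real^3. q$3 \<in> I}"
  using open_vimage_vec_nth[OF open_I, of 3] by (simp add: vimage_def)

lemma pd3_sigma_near_p: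
  "q \<in> {q. q$3 \<in> I} \<Longrightarrow> pd 3 (sigma lam x y) q = (\<lambda>q. (curve_vel x y (q$3) * sigma_fst x y q, 0)) q"
  by (simp add: pd3_sigma x_deriv y_deriv)

lemma pd31_sigma:
  "pd 3 (pd 1 (sigma lam x y)) p = (curve_vel x y (p$3) * sigma_fst x y p, of_real lam * 0)"
  unfolding pd1_sigma[abs_def] curve_vel_def
  by (intro pd_eqI has_vector_derivative_Pair sigma_fst_deriv3 sigma_snd_deriv3
      has_vector_derivative_mult_right x_deriv y_deriv p_in_I)

lemma pd32_sigma:
  "pd 3 (pd 2 (sigma lam x y)) p = (\<i> * (curve_vel x y (p$3) * sigma_fst x y p), \<i> * of_real lam * 0)"
  unfolding pd2_sigma[abs_def] curve_vel_def
  by (intro pd_eqI has_vector_derivative_Pair sigma_fst_deriv3 sigma_snd_deriv3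
      has_vector_derivative_mult_right x_deriv y_deriv p_in_I)

lemma pd13_sigma: "pd 1 (pd 3 (sigma lam x y)) p = (curve_vel x y (p$3) * sigma_fst x y p, 0)"
proof (rule pd_eqI_open[OF open_slab _ pd3_sigma_near_p])
  show "p \<in> {q. q$3 \<in> I}"
    using p_in_I by simp
  show "((\<lambda>h. (curve_vel x y ((p + h *\<^sub>R axis 1 1)$3) * sigma_fst x y (p + h *\<^sub>R axis 1 1), 0))
      has_vector_derivative (curve_vel x y (p$3) * sigma_fst x y p, 0)) (at 0)"
    unfolding nth3_line1
    by (intro has_vector_derivative_Pair has_vector_derivative_mult_right sigma_fst_deriv1
        has_vector_derivative_const)
qed

lemma pd23_sigma: "pd 2 (pd 3 (sigma lam x y)) p = (curve_vel x y (p$3) * (\<i> * sigma_fst x y p), 0)"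
proof (rule pd_eqI_open[OF open_slab _ pd3_sigma_near_p])
  show "p \<in> {q. q$3 \<in> I}"
    using p_in_I by simp
  show "((\<lambda>h. (curve_vel x y ((p + h *\<^sub>R axis 2 1)$3) * sigma_fst x y (p + h *\<^sub>R axis 2 1), 0))
      has_vector_derivative (curve_vel x y (p$3) * (\<i> * sigma_fst x y p), 0)) (at 0)"
    unfolding nth3_line2
    by (intro has_vector_derivative_Pair has_vector_derivative_mult_right sigma_fst_deriv2
        has_vector_derivative_const)
qed

lemma pd33_sigma:
  "pd 3 (pd 3 (sigma lam x y)) p
     = (curve_vel x y (p$3) * (curve_vel x y (p$3) * sigma_fst x y p) + curve_acc x y (p$3) * sigma_fst x y p, 0)"
proof (rule pd_eqI_open[OF open_slab _ pd3_sigma_near_p])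
  show "p \<in> {q. q$3 \<in> I}"
    using p_in_I by simp
  have "((\<lambda>h. curve_vel x y ((p + h *\<^sub>R axis 3 1)$3) * sigma_fst x y (p + h *\<^sub>R axis 3 1))
      has_vector_derivative curve_vel x y ((p + 0 *\<^sub>R axis 3 1)$3) * (Complex (deriv x (p$3)) (deriv y (p$3))
        * sigma_fst x y p) + curve_acc x y (p$3) * sigma_fst x y (p + 0 *\<^sub>R axis 3 1)) (at 0)"
    by (intro has_vector_derivative_mult curve_vel_deriv3 sigma_fst_deriv3 x_deriv2 y_deriv2 x_deriv
        y_deriv p_in_I)
  then show "((\<lambda>h. (curve_vel x y ((p + h *\<^sub>R axis 3 1)$3) * sigma_fst x y (p + h *\<^sub>R axis 3 1), 0))
      has_vector_derivative (curve_vel x y (p$3) * (curve_vel x y (p$3) * sigma_fst x y p)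
        + curve_acc x y (p$3) * sigma_fst x y p, 0)) (at 0)"
    by (intro has_vector_derivative_Pair has_vector_derivative_const) (simp add: curve_vel_def)
qed

lemma second_pd_frame:
  "pd 1 (pd 1 (sigma lam x y)) p = (1 * a1, (of_real lam * of_real lam) * a2)"
  "pd 2 (pd 1 (sigma lam x y)) p = (\<i> * a1, (\<i> * of_real lam * of_real lam) * a2)"
  "pd 1 (pd 2 (sigma lam x y)) p = (\<i> * a1, (\<i> * of_real lam * of_real lam) * a2)"
  "pd 2 (pd 2 (sigma lam x y)) p = ((-1) * a1, (- (of_real lam * of_real lam)) * a2)"
  "pd 3 (pd 1 (sigma lam x y)) p = (c * a1, 0 * a2)"
  "pd 3 (pd 2 (sigma lam x y)) p = ((\<i> * c) * a1, 0 * a2)"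
  "pd 1 (pd 3 (sigma lam x y)) p = (c * a1, 0 * a2)"
  "pd 2 (pd 3 (sigma lam x y)) p = ((\<i> * c) * a1, 0 * a2)"
  "pd 3 (pd 3 (sigma lam x y)) p = ((c * c + d) * a1, 0 * a2)"
  by (simp_all add: pd11_sigma pd21_sigma pd12_sigma pd22_sigma pd31_sigma pd32_sigma pd13_sigma
      pd23_sigma pd33_sigma a1_def a2_def c_def d_def algebra_simps)

lemma FS_frame: "FS (a1, a2) (\<alpha> * a1, \<beta> * a2) (\<gamma> * a1, \<delta> * a2) = Re (fs_frame A B \<alpha> \<beta> \<gamma> \<delta>)"
  by (simp add: FS_eq_Re_fs_herm fs_herm_frame frame_nonzero A_def B_def)

lemma ind_metric_eq: "ind_metric (sigma lam x y) p = gram3 P Q R u v"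
  unfolding ind_metric_def vec_eq_iff forall_3 gram3_def
  by (simp only: vec_lambda_beta sym3_nth sigma_at_p pd_frame FS_frame)
    (simp add: c_eq fs_frame_def P_def Q_def R_def NN_def field_simps power2_eq_square)

lemma P_pos: "P > 0"
  unfolding P_def using A_pos B_pos NN_pos
  by (intro divide_pos_pos add_pos_nonneg) (auto intro!: add_pos_nonneg mult_nonneg_nonneg)

lemma gram_minor_pos: "P * R - Q\<^sup>2 > 0"
proof -
  have "P * R - Q\<^sup>2 = lam\<^sup>2 * A * B / NN^3"
    unfolding P_def Q_def R_def using NN_nonzero
    by (simp add: field_simps power2_eq_square power3_eq_cube, simp add: NN_def algebra_simps)
  then show ?thesis
    using A_pos B_pos NN_pos lam_nonzero by simp
qed

lemma matrix_inv_ind_metric: "matrix_inv (ind_metric (sigma lam x y) p) = gram3_inv P Q R u v"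
  unfolding ind_metric_eq using P_pos speed_pos gram_minor_pos by (intro matrix_inv_gram3) auto

definition "K1 n = (of_real (A * (1 + B)) * cnj (fst n / a1) - of_real (A * B) * cnj (snd n / a2))
  / of_real (NN\<^sup>2)"
definition "K2 n = (of_real (B * (1 + A)) * cnj (snd n / a2) - of_real (A * B) * cnj (fst n / a1))
  / of_real (NN\<^sup>2)"

lemma FS_frame_K: "FS (a1, a2) (\<alpha> * a1, \<beta> * a2) n = Re (\<alpha> * K1 n + \<beta> * K2 n)"
proof -
  have "n = (fst n / a1 * a1, snd n / a2 * a2)"
    using frame_nonzero by simp
  then have "FS (a1, a2) (\<alpha> * a1, \<beta> * a2) n
      = FS (a1, a2) (\<alpha> * a1, \<beta> * a2) (fst n / a1 * a1, snd n / a2 * a2)"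
    by simp
  also have "\<dots> = Re (\<alpha> * K1 n + \<beta> * K2 n)"
    unfolding FS_frame fs_frame_linear K1_def K2_def NN_def ..
  finally show ?thesis .
qed

lemma second_ff_frame_general:
  assumes "pd a (sigma lam x y) p = (\<alpha> * a1, \<beta> * a2)" "pd b (sigma lam x y) p = (\<gamma> * a1, \<delta> * a2)"
    and "pd a (pd b (sigma lam x y)) p = (\<epsilon> * a1, \<eta> * a2)"
  shows "second_ff (sigma lam x y) p n a b =
    Re ((\<epsilon> - ((\<alpha> * of_real A + \<beta> * of_real B) * \<gamma> + (\<gamma> * of_real A + \<delta> * of_real B) * \<alpha>) / of_real NN)
          * K1 n
      + (\<eta> - ((\<alpha> * of_real A + \<beta> * of_real B) * \<delta> + (\<gamma> * of_real A + \<delta> * of_real B) * \<beta>) / of_real NN)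
          * K2 n)"
proof -
  have "second_ff (sigma lam x y) p n a b
      = FS (a1, a2) (\<epsilon> * a1, \<eta> * a2) n
        + FS (a1, a2) (fs_christoffel (a1, a2) (\<alpha> * a1, \<beta> * a2) (\<gamma> * a1, \<delta> * a2)) n"
    unfolding second_ff_eq_christoffel sigma_at_p assms ..
  also have "\<dots> = Re (\<epsilon> * K1 n + \<eta> * K2 n)
      + Re ((- ((\<alpha> * of_real A + \<beta> * of_real B) * \<gamma> + (\<gamma> * of_real A + \<delta> * of_real B) * \<alpha>) / of_real NN)
              * K1 n
          + (- ((\<alpha> * of_real A + \<beta> * of_real B) * \<delta> + (\<gamma> * of_real A + \<delta> * of_real B) * \<beta>) / of_real NN)
              * K2 n)"
    unfolding fs_christoffel_frame[OF frame_nonzero] FS_frame_K A_def[symmetric] B_def[symmetric] NN_def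
    by simp
  also have "\<dots> = Re ((\<epsilon> - ((\<alpha> * of_real A + \<beta> * of_real B) * \<gamma> + (\<gamma> * of_real A + \<delta> * of_real B) * \<alpha>)
          / of_real NN) * K1 n
      + (\<eta> - ((\<alpha> * of_real A + \<beta> * of_real B) * \<delta> + (\<gamma> * of_real A + \<delta> * of_real B) * \<beta>)
          / of_real NN) * K2 n)"
    by (subst plus_complex.sel(1)[symmetric], rule arg_cong[where f=Re])
      (use NN_pos in \<open>simp add: field_simps\<close>)
  finally show ?thesis .
qed

definition "s = A + lam * B"
definition "E1 = 1 - 2 * s / NN"
definition "E2 = lam\<^sup>2 - 2 * s * lam / NN"
definition "S1 = 1 - (s + A) / NN"
definition "S2 = - lam * A / NN"
definition "R1 = c * c + d - 2 * c * c * of_real A / of_real NN"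

lemma second_ff_frame:
  "second_ff (sigma lam x y) p n 1 1 = Re (of_real E1 * K1 n + of_real E2 * K2 n)"
  "second_ff (sigma lam x y) p n 1 2 = Re (\<i> * of_real E1 * K1 n + \<i> * of_real E2 * K2 n)"
  "second_ff (sigma lam x y) p n 2 1 = Re (\<i> * of_real E1 * K1 n + \<i> * of_real E2 * K2 n)"
  "second_ff (sigma lam x y) p n 2 2 = Re (- of_real E1 * K1 n - of_real E2 * K2 n)"
  "second_ff (sigma lam x y) p n 1 3 = Re (c * of_real S1 * K1 n + c * of_real S2 * K2 n)"
  "second_ff (sigma lam x y) p n 3 1 = Re (c * of_real S1 * K1 n + c * of_real S2 * K2 n)"
  "second_ff (sigma lam x y) p n 2 3 = Re (\<i> * c * of_real S1 * K1 n + \<i> * c * of_real S2 * K2 n)"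
  "second_ff (sigma lam x y) p n 3 2 = Re (\<i> * c * of_real S1 * K1 n + \<i> * c * of_real S2 * K2 n)"
  "second_ff (sigma lam x y) p n 3 3 = Re (R1 * K1 n)"
  by (simp_all only: second_ff_frame_general[OF pd_frame(1) pd_frame(1) second_pd_frame(1)]
      second_ff_frame_general[OF pd_frame(1) pd_frame(2) second_pd_frame(3)]
      second_ff_frame_general[OF pd_frame(2) pd_frame(1) second_pd_frame(2)]
      second_ff_frame_general[OF pd_frame(2) pd_frame(2) second_pd_frame(4)]
      second_ff_frame_general[OF pd_frame(1) pd_frame(3) second_pd_frame(7)]
      second_ff_frame_general[OF pd_frame(3) pd_frame(1) second_pd_frame(5)]
      second_ff_frame_general[OF pd_frame(2) pd_frame(3) second_pd_frame(8)]
      second_ff_frame_general[OF pd_frame(3) pd_frame(2) second_pd_frame(6)]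
      second_ff_frame_general[OF pd_frame(3) pd_frame(3) second_pd_frame(9)])
    (rule arg_cong[where f=Re], use NN_nonzero in
      \<open>simp add: E1_def E2_def S1_def S2_def R1_def s_def field_simps power2_eq_square\<close>)+

definition "DD = gram3_det P Q R u v"
definition "H1 = (c * c * of_real (Q\<^sup>2) * of_real E1 - 2 * of_real (Q * P) * c * c * of_real S1
  + of_real (P\<^sup>2) * R1) / of_real DD"
definition "H2 = (c * c * of_real (Q\<^sup>2) * of_real E2 - 2 * of_real (Q * P) * c * c * of_real S2)
  / of_real DD"

lemma DD_pos: "DD > 0"
  unfolding DD_def gram3_det_def using P_pos speed_pos gram_minor_pos by simp

lemma mean_curv_eq_H: "mean_curv (sigma lam x y) p n = Re (H1 * K1 n + H2 * K2 n)"
proof -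
  define m11 where "m11 = (P * (u\<^sup>2 + v\<^sup>2) * R - v\<^sup>2 * Q\<^sup>2) / DD"
  define m12 where "m12 = u * v * Q\<^sup>2 / DD"
  define m13 where "m13 = - u * Q * P / DD"
  define m22 where "m22 = (P * (u\<^sup>2 + v\<^sup>2) * R - u\<^sup>2 * Q\<^sup>2) / DD"
  define m23 where "m23 = - v * Q * P / DD"
  define m33 where "m33 = P\<^sup>2 / DD"
  have D0: "complex_of_real DD \<noteq> 0"
    using DD_pos by auto
  have Re_scale: "r * Re z = Re (of_real r * z)" for r z
    by simp
  have "mean_curv (sigma lam x y) p n =
     m11 * Re (of_real E1 * K1 n + of_real E2 * K2 n) + m12 * Re (\<i> * of_real E1 * K1 n + \<i> * of_real E2 * K2 n)
   + m13 * Re (c * of_real S1 * K1 n + c * of_real S2 * K2 n)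
   + (m12 * Re (\<i> * of_real E1 * K1 n + \<i> * of_real E2 * K2 n) + m22 * Re (- of_real E1 * K1 n - of_real E2 * K2 n)
   + m23 * Re (\<i> * c * of_real S1 * K1 n + \<i> * c * of_real S2 * K2 n))
   + (m13 * Re (c * of_real S1 * K1 n + c * of_real S2 * K2 n)
   + m23 * Re (\<i> * c * of_real S1 * K1 n + \<i> * c * of_real S2 * K2 n)
   + m33 * Re (R1 * K1 n))"
    unfolding mean_curv_def matrix_inv_ind_metric sum_3 gram3_inv_def sym3_nth second_ff_frame
      m11_def m12_def m13_def m22_def m23_def m33_def DD_def
    by (simp only: mult.assoc add.assoc)
  also have "\<dots> = Re ((of_real m11 - of_real m22 + 2 * \<i> * of_real m12) * (of_real E1 * K1 n + of_real E2 * K2 n)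
      + 2 * (of_real m13 + \<i> * of_real m23) * c * (of_real S1 * K1 n + of_real S2 * K2 n)
      + of_real m33 * R1 * K1 n)"
    unfolding Re_scale
    by (simp only: plus_complex.sel(1)[symmetric], rule arg_cong[where f=Re], simp add: algebra_simps)
  also have "of_real m11 - of_real m22 + 2 * \<i> * of_real m12 = c * c * of_real (Q\<^sup>2) / of_real DD"
    unfolding m11_def m22_def m12_def c_eq using D0
    by (simp add: complex_eq_iff field_simps power2_eq_square)
  also have "of_real m13 + \<i> * of_real m23 = - (of_real (Q * P) * c) / of_real DD"
    unfolding m13_def m23_def c_eq using D0
    by (simp add: complex_eq_iff field_simps power2_eq_square)
  also have "Re (c * c * of_real (Q\<^sup>2) / of_real DD * (of_real E1 * K1 n + of_real E2 * K2 n)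
      + 2 * (- (of_real (Q * P) * c) / of_real DD) * c * (of_real S1 * K1 n + of_real S2 * K2 n)
      + of_real m33 * R1 * K1 n)
     = Re (H1 * K1 n + H2 * K2 n)"
    unfolding H1_def H2_def m33_def using D0
    by (rule_tac arg_cong[where f=Re], simp add: field_simps)
  finally show ?thesis .
qed

definition "beta = Q\<^sup>2 * (1 - lam) - 2 * Q * P * (1 + B - lam * B) / NN + P\<^sup>2 * (1 + B - A) / NN"
definition "nu = (c * c * of_real beta + d * of_real (P\<^sup>2)) / of_real DD"

lemma FS_pd_K:
  "FS (sigma lam x y p) n (pd 1 (sigma lam x y) p) = Re (K1 n + of_real lam * K2 n)"
  "FS (sigma lam x y p) n (pd 2 (sigma lam x y) p) = Re (\<i> * (K1 n + of_real lam * K2 n))"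
  "FS (sigma lam x y p) n (pd 3 (sigma lam x y) p) = Re (c * K1 n)"
  unfolding FS_commute[of _ n] sigma_at_p pd_frame FS_frame_K by (simp_all add: algebra_simps)

text \<open>\<open>K1 n + \<lambda> K2 n\<close> is the pairing of \<open>n\<close> with the complex tangent line of the leaf, so
  for normal \<open>n\<close> only the \<open>\<nu>\<close>-term survives.\<close>
lemma mean_curv_split:
  "mean_curv (sigma lam x y) p n = Re ((H2 / of_real lam) * (K1 n + of_real lam * K2 n)) + Re (nu * K1 n)"
proof -
  have "H1 - H2 / of_real lam = nu"
    unfolding H1_def H2_def nu_def beta_def E1_def E2_def S1_def S2_def R1_def s_def
    using DD_pos NN_nonzero lam_nonzero
    by (simp add: field_simps power2_eq_square, simp add: NN_def algebra_simps)
  then have H1: "H1 = H2 / of_real lam + nu"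
    by (metis add.commute diff_add_cancel)
  have "H1 * K1 n + H2 * K2 n = (H2 / of_real lam) * (K1 n + of_real lam * K2 n) + nu * K1 n"
    using lam_nonzero unfolding H1 by (simp add: field_simps)
  then show ?thesis
    unfolding mean_curv_eq_H by simp
qed

lemma mean_curv_eq_0_if_flat:
  assumes "deriv y (p$3) = 0" and "deriv (deriv y) (p$3) = 0"
    and normal: "\<forall>a. FS (sigma lam x y p) n (pd a (sigma lam x y) p) = 0"
  shows "mean_curv (sigma lam x y) p n = 0"
proof -
  have v0: "v = 0" "v2 = 0"
    using assms by (simp_all add: v_def v2_def)
  then have "u \<noteq> 0"
    using velocity_nonzero by (simp add: u_def v_def)
  have "K1 n + of_real lam * K2 n = 0"
    using normal[rule_format, of 1] normal[rule_format, of 2] by (simp add: FS_pd_K complex_eq_iff)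
  moreover have "Re (K1 n) = 0"
    using normal[rule_format, of 3] \<open>u \<noteq> 0\<close> by (simp add: FS_pd_K c_eq v0)
  moreover have "Im nu = 0"
    unfolding nu_def c_eq d_eq v0 by (simp add: Im_divide)
  ultimately show ?thesis
    unfolding mean_curv_split by simp
qed

text \<open>A normal vector: \<open>K1 n0 + \<lambda> K2 n0 = 0\<close> makes it orthogonal to \<open>\<sigma>\<^sub>s, \<sigma>\<^sub>t\<close>, and
  \<open>K1 n0 \<in> \<i> cnj c \<real>\<close> makes it orthogonal to \<open>\<sigma>\<^sub>r\<close>.\<close>
definition "n0 = ((- \<i> * c * of_real (B * (lam * (1 + A) - A))) * a1,
  (- \<i> * c * of_real (A * (lam * B - 1 - B))) * a2)"

lemma K_n0:
  "K1 n0 = \<i> * of_real lam * cnj c * of_real (A * B / NN)"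
  "K2 n0 = - \<i> * cnj c * of_real (A * B / NN)"
proof -
  have n0_coords: "fst n0 / a1 = - \<i> * c * of_real (B * (lam * (1 + A) - A))"
    "snd n0 / a2 = - \<i> * c * of_real (A * (lam * B - 1 - B))"
    using frame_nonzero by (simp_all add: n0_def)
  show "K1 n0 = \<i> * of_real lam * cnj c * of_real (A * B / NN)"
    unfolding K1_def n0_coords using NN_nonzero
    by (simp add: field_simps power2_eq_square, simp add: NN_def algebra_simps)
  show "K2 n0 = - \<i> * cnj c * of_real (A * B / NN)"
    unfolding K2_def n0_coords using NN_nonzero
    by (simp add: field_simps power2_eq_square, simp add: NN_def algebra_simps)
qed

lemma n0_normal: "\<forall>a. FS (sigma lam x y p) n0 (pd a (sigma lam x y) p) = 0"
  unfolding forall_3 FS_pd_K K_n0 c_eq by (simp add: algebra_simps)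

lemma mean_curv_n0:
  "mean_curv (sigma lam x y) p n0
     = - (lam * A * B / NN) * ((beta * (u\<^sup>2 + v\<^sup>2) * v + P\<^sup>2 * (v2 * u - u2 * v)) / DD)"
proof -
  have "mean_curv (sigma lam x y) p n0 = Re (nu * K1 n0)"
    unfolding mean_curv_split K_n0 by (simp add: algebra_simps)
  also have "\<dots> = - (lam * A * B / NN) * Im (nu * cnj c)"
    unfolding K_n0 using NN_nonzero by (simp add: field_simps)
  also have "Im (nu * cnj c) = (beta * (u\<^sup>2 + v\<^sup>2) * v + P\<^sup>2 * (v2 * u - u2 * v)) / DD"
    unfolding nu_def c_eq d_eq using DD_pos
    by (simp add: Im_divide power2_eq_square algebra_simps, simp add: field_simps)
  finally show ?thesis .
qed

lemma P_eq_speed_poly: "P = speed_poly lam A B / NN\<^sup>2"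
  unfolding P_def speed_poly_def ..

lemma beta_eq: "beta = curv_poly lam A B / NN^4"
proof -
  have "beta = ((A * (1 + B - lam * B))\<^sup>2 * (1 - lam) * NN
      - 2 * (A * (1 + B - lam * B)) * speed_poly lam A B * (1 + B - lam * B)
      + (speed_poly lam A B)\<^sup>2 * (1 + B - A)) / NN^5"
    unfolding beta_def P_eq_speed_poly Q_def using NN_nonzero by (simp add: field_simps eval_nat_numeral)
  also have "(A * (1 + B - lam * B))\<^sup>2 * (1 - lam) * NN
      - 2 * (A * (1 + B - lam * B)) * speed_poly lam A B * (1 + B - lam * B)
      + (speed_poly lam A B)\<^sup>2 * (1 + B - A) = NN * curv_poly lam A B"
    unfolding NN_def speed_poly_def curv_poly_def
    by (simp add: power2_eq_square power3_eq_cube power4_eq_mult algebra_simps)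
  also have "NN * curv_poly lam A B / NN^5 = curv_poly lam A B / NN^4"
    using NN_nonzero by (simp add: eval_nat_numeral)
  finally show ?thesis .
qed

lemma curv_ratio_if_minimal:
  assumes minimal: "\<forall>n. (\<forall>a. FS (sigma lam x y p) n (pd a (sigma lam x y) p) = 0)
      \<longrightarrow> mean_curv (sigma lam x y) p n = 0"
    and "deriv y (p$3) \<noteq> 0"
  shows "curv_ratio lam ((cmod (sigma_fst x y p))\<^sup>2) ((cmod (sigma_snd lam p))\<^sup>2)
    = - (deriv (deriv y) (p$3) * deriv x (p$3) - deriv (deriv x) (p$3) * deriv y (p$3))
      / (((deriv x (p$3))\<^sup>2 + (deriv y (p$3))\<^sup>2) * deriv y (p$3))"
proof -
  have "mean_curv (sigma lam x y) p n0 = 0"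
    using minimal n0_normal by blast
  then have "beta * (u\<^sup>2 + v\<^sup>2) * v + P\<^sup>2 * (v2 * u - u2 * v) = 0"
    unfolding mean_curv_n0 using lam_nonzero A_pos B_pos NN_pos DD_pos by simp
  moreover have "beta * (u\<^sup>2 + v\<^sup>2) * v + P\<^sup>2 * (v2 * u - u2 * v)
      = (curv_poly lam A B * (u\<^sup>2 + v\<^sup>2) * v + (speed_poly lam A B)\<^sup>2 * (v2 * u - u2 * v)) / NN^4"
    unfolding beta_eq P_eq_speed_poly power_divide
    by (simp add: add_divide_distrib flip: power_mult)
  ultimately have "curv_poly lam A B * (u\<^sup>2 + v\<^sup>2) * v + (speed_poly lam A B)\<^sup>2 * (v2 * u - u2 * v) = 0"
    using NN_nonzero by simp
  then have "curv_poly lam A B * ((u\<^sup>2 + v\<^sup>2) * v) = - (v2 * u - u2 * v) * (speed_poly lam A B)\<^sup>2"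
    by algebra
  moreover have "(u\<^sup>2 + v\<^sup>2) * v \<noteq> 0" "speed_poly lam A B \<noteq> 0"
    using assms(2) speed_pos speed_poly_pos[OF A_pos B_pos, of lam] by (auto simp: v_def)
  ultimately have "curv_ratio lam A B = - (v2 * u - u2 * v) / ((u\<^sup>2 + v\<^sup>2) * v)"
    unfolding curv_ratio_def by (simp add: frac_eq_eq)
  then show ?thesis
    unfolding A_def B_def a1_def a2_def u_def v_def u2_def v2_def .
qed

end

lemma minimal_param_sigma_if_flat:
  assumes "\<And>p. p$3 \<in> I \<Longrightarrow> sigma_point I lam x y p"
    and "\<forall>r\<in>I. deriv y r = 0" "\<forall>r\<in>I. deriv (deriv y) r = 0"
  shows "minimal_param (sigma lam x y) {p. p$3 \<in> I}"
  unfolding minimal_param_def using sigma_point.mean_curv_eq_0_if_flat[OF assms(1)] assms(2,3) by simp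

lemma curv_ratio_constant_on_leaf_if_minimal:
  assumes point: "\<And>p. p$3 \<in> I \<Longrightarrow> sigma_point I lam x y p"
    and minimal: "minimal_param (sigma lam x y) {p. p$3 \<in> I}" and "r \<in> I" "deriv y r \<noteq> 0"
  shows "\<exists>K. \<forall>s. curv_ratio lam (exp (2 * s + 2 * x r)) (exp (2 * lam * s)) = K"
proof (intro exI allI)
  fix s
  define q :: "real^3" where "q = vector [s, 0, r]"
  have "q$3 \<in> I"
    using assms(3) by (simp add: q_def)
  with minimal have "\<forall>n. (\<forall>a. FS (sigma lam x y q) n (pd a (sigma lam x y) q) = 0)
      \<longrightarrow> mean_curv (sigma lam x y) q n = 0"
    unfolding minimal_param_def by blast
  from sigma_point.curv_ratio_if_minimal[OF point[OF \<open>q$3 \<in> I\<close>] this]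
  show "curv_ratio lam (exp (2 * s + 2 * x r)) (exp (2 * lam * s))
    = - (deriv (deriv y) r * deriv x r - deriv (deriv x) r * deriv y r)
      / (((deriv x r)\<^sup>2 + (deriv y r)\<^sup>2) * deriv y r)"
    using assms(4) by (simp add: q_def norm_sigma_fst_real_axis norm_sigma_snd_real_axis)
qed

theorem mainTheorem7:
  fixes lam :: real and x y :: "real \<Rightarrow> real" and I :: "real set"
  assumes "lam \<noteq> 0" and "lam \<noteq> 1"
    and "open I" and "is_interval I" and "I \<noteq> {}"
    and "smooth_on x I" and "smooth_on y I"
    and "\<forall>r\<in>I. (deriv x r, deriv y r) \<noteq> (0, 0)"
  shows "minimal_param (sigma lam x y) {p. p$3 \<in> I} \<longleftrightarrow> (\<exists>c. \<forall>r\<in>I. y r = c)"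
proof -
  have point: "sigma_point I lam x y p" if "p$3 \<in> I" for p
    using assms that smooth_on_has_real_derivative smooth_on_deriv_has_real_derivative
    by unfold_locales blast+
  show ?thesis
  proof
    assume minimal: "minimal_param (sigma lam x y) {p. p$3 \<in> I}"
    show "\<exists>c. \<forall>r\<in>I. y r = c"
    proof (rule ccontr)
      assume "\<nexists>c. \<forall>r\<in>I. y r = c"
      then obtain r where "r \<in> I" "deriv y r \<noteq> 0"
        using constant_on_if_deriv_eq_0[OF \<open>is_interval I\<close> smooth_on_has_real_derivative[OF assms(7)]]
        by blast
      with curv_ratio_constant_on_leaf_if_minimal[OF point minimal]
        curv_ratio_nonconstant_on_leaf[OF assms(1,2)] show False
        by blast
    qed
  next
    assume "\<exists>c. \<forall>r\<in>I. y r = c"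
    then have "\<forall>r\<in>I. deriv y r = 0"
      using deriv_eq_0_if_constant_on[OF \<open>open I\<close>] by blast
    moreover from this have "\<forall>r\<in>I. deriv (deriv y) r = 0"
      using deriv_eq_0_if_constant_on[OF \<open>open I\<close>] by blast
    ultimately show "minimal_param (sigma lam x y) {p. p$3 \<in> I}"
      using minimal_param_sigma_if_flat[OF point] by blast
  qed
qed

end
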